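(* If a formula $A$ is valid in every neighbourhood model satisfying centering (that is, in all models of $\mathbb{PC}$), then the sequent $\Rightarrow x:A$ is derivable in $\mathsf{CL}^C$.
   Context: Formulas $\mathcal{L}::=p\mid\bot\mid A\wedge B\mid A\lor B\mid A\to B\mid A>B$. Neighbourhood model $\langle W,N,\llbracket\cdot\rrbracket\rangle$: $W\ne\emptyset$, $N:W\to\mathcal{P}(\mathcal{P}(W))$ with all $\alpha\in N(x)$ non-empty; $x\Vdash A>B$ iff every $\alpha\in N(x)$ containing an $A$-world has some $\beta\in N(x)$, $\beta\subseteq\alpha$, containing an $A$-world, with all worlds of $\beta$ forcing $A\to B$. Centering: for all $x\in W$, $x\in\alpha$ for every $\alpha\in N(x)$, and $\{x\}\in N(x)$. $\mathsf{CL}^C$: world labels, neighbourhood labels including $\{x\}$ for each world label $x$; relational atoms $a\in N(x)$, $x\in a$, $a\subseteq b$; labelled formulas: these, $x:A$, $a\Vdash^\exists A$, $a\Vdash^\forall A$, $x\Vdash_aA|B$. Rules (premisses / conclusion; "fresh": not in conclusion): initial $x:p,\Gamma\Rightarrow\Delta,x:p$ ($p$ atomic), $x:\bot,\Gamma\Rightarrow\Delta$; G3 propositional rules; L$\forall$: $x:A,x\in a,a\Vdash^\forall A,\Gamma\Rightarrow\Delta$ / $x\in a,a\Vdash^\forall A,\Gamma\Rightarrow\Delta$; R$\forall$ (x fresh): $x\in a,\Gamma\Rightarrow\Delta,x:A$ / $\Gamma\Rightarrow\Delta,a\Vdash^\forall A$; L$\exists$ (x fresh): $x\in a,x:A,\Gamma\Rightarrow\Delta$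 / $a\Vdash^\exists A,\Gamma\Rightarrow\Delta$; R$\exists$: $x\in a,\Gamma\Rightarrow\Delta,x:A,a\Vdash^\exists A$ / $x\in a,\Gamma\Rightarrow\Delta,a\Vdash^\exists A$; R$>$ (a fresh): $a\in N(x),a\Vdash^\exists A,\Gamma\Rightarrow\Delta,x\Vdash_aA|B$ / $\Gamma\Rightarrow\Delta,x:A>B$; L$>$: $a\in N(x),x:A>B,\Gamma\Rightarrow\Delta,a\Vdash^\exists A$ and $x\Vdash_aA|B,a\in N(x),x:A>B,\Gamma\Rightarrow\Delta$ / $a\in N(x),x:A>B,\Gamma\Rightarrow\Delta$; R$|$: $c\in N(x),c\subseteq a,\Gamma\Rightarrow\Delta,x\Vdash_aA|B,c\Vdash^\exists A$ and $c\in N(x),c\subseteq a,\Gamma\Rightarrow\Delta,x\Vdash_aA|B,c\Vdash^\forall A\to B$ / $c\in N(x),c\subseteq a,\Gamma\Rightarrow\Delta,x\Vdash_aA|B$; L$|$ (c fresh): $c\in N(x),c\subseteq a,c\Vdash^\exists A,c\Vdash^\forall A\to B,\Gamma\Rightarrow\Delta$ / $x\Vdash_aA|B,\Gamma\Rightarrow\Delta$; Ref: $a\subseteq a,\Gamma\Rightarrow\Delta$ / $\Gamma\Rightarrow\Delta$; Tr: $c\subseteq a,c\subseteq b,b\subseteq a,\Gamma\Rightarrow\Delta$ / $c\subseteq b,b\subseteq a,\Gamma\Rightarrow\Delta$; L$\subseteq$: $x\in a,a\subseteq b,x\in b,\Gamma\Rightarrow\Delta$ / $x\in a,a\subseteq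 b,\Gamma\Rightarrow\Delta$; N (a fresh): $a\in N(x),\Gamma\Rightarrow\Delta$ / $\Gamma\Rightarrow\Delta$; 0 (y fresh): $y\in a,a\in N(x),\Gamma\Rightarrow\Delta$ / $a\in N(x),\Gamma\Rightarrow\Delta$; T (a fresh): $x\in a,a\in N(x),\Gamma\Rightarrow\Delta$ / $\Gamma\Rightarrow\Delta$; W: $x\in a,a\in N(x),\Gamma\Rightarrow\Delta$ / $a\in N(x),\Gamma\Rightarrow\Delta$; Single: $x\in\{x\},\{x\}\in N(x),\Gamma\Rightarrow\Delta$ / $\{x\}\in N(x),\Gamma\Rightarrow\Delta$; C: $\{x\}\in N(x),\{x\}\subseteq a,a\in N(x),\Gamma\Rightarrow\Delta$ / $a\in N(x),\Gamma\Rightarrow\Delta$; Repl$_1$: $y\in\{x\},At(x),At(y),\Gamma\Rightarrow\Delta$ / $y\in\{x\},At(x),\Gamma\Rightarrow\Delta$; Repl$_2$: $y\in\{x\},At(x),At(y),\Gamma\Rightarrow\Delta$ / $y\in\{x\},At(y),\Gamma\Rightarrow\Delta$, where $At(x)$ is one of $x:P$ ($P$ atomic), $x\in a$, $a\in N(x)$, $x\in\{z\}$ and $At(y)$ replaces $x$ by $y$. *)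

theory Defs
  imports Main "HOL-Library.Multiset"
begin

datatype fm = Atom nat | Bot | And fm fm | Or fm fm | Imp fm fm | Cond fm fm

record 'w nmodel =
  W  :: "'w set"
  Nb :: "'w \<Rightarrow> 'w set set"
  V  :: "nat \<Rightarrow> 'w set"

definition nmodel :: "'w nmodel \<Rightarrow> bool" where
  "nmodel M \<longleftrightarrow> W M \<noteq> {} \<and> (\<forall>x\<in>W M. \<forall>\<alpha>\<in>Nb M x. \<alpha> \<noteq> {} \<and> \<alpha> \<subseteq> W M)"

definition centering :: "'w nmodel \<Rightarrow> bool" where
  "centering M \<longleftrightarrow> (\<forall>x\<in>W M. (\<forall>\<alpha>\<in>Nb M x. x \<in> \<alpha>) \<and> {x} \<in> Nb M x)"

fun forces :: "'w nmodel \<Rightarrow> 'w \<Rightarrow> fm \<Rightarrow> bool" where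
  "forces M x (Atom p) = (x \<in> V M p)"
| "forces M x Bot = False"
| "forces M x (And A B) = (forces M x A \<and> forces M x B)"
| "forces M x (Or A B) = (forces M x A \<or> forces M x B)"
| "forces M x (Imp A B) = (forces M x A \<longrightarrow> forces M x B)"
| "forces M x (Cond A B) =
     (\<forall>\<alpha>\<in>Nb M x. (\<exists>y\<in>\<alpha>. forces M y A) \<longrightarrow>
        (\<exists>\<beta>\<in>Nb M x. \<beta> \<subseteq> \<alpha> \<and> (\<exists>y\<in>\<beta>. forces M y A) \<and>
                     (\<forall>y\<in>\<beta>. forces M y A \<longrightarrow> forces M y B)))"

definition valid_in :: "'w nmodel \<Rightarrow> fm \<Rightarrow> bool" where
  "valid_in M A \<longleftrightarrow> (\<forall>x\<in>W M. forces M x A)"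

text \<open>World labels are natural numbers; neighbourhood labels are either variables
  NV n or singleton labels Sg x (standing for {x}).\<close>

datatype nl = NV nat | Sg nat

datatype lf =
    InN nl nat              (* a \<in> N(x) *)
  | InW nat nl              (* x \<in> a *)
  | Sub nl nl
  | Lab nat fm
  | ExF nl fm               (* a \<Vdash>\<exists> A *)
  | AllF nl fm              (* a \<Vdash>\<forall> A *)
  | Cnd nat nl fm fm        (* x \<Vdash>_a A | B *)

fun wl_nl :: "nl \<Rightarrow> nat set" where
  "wl_nl (NV n) = {}" | "wl_nl (Sg x) = {x}"

fun nv_nl :: "nl \<Rightarrow> nat set" where
  "nv_nl (NV n) = {n}" | "nv_nl (Sg x) = {}"

fun wl_lf :: "lf \<Rightarrow> nat set" where
  "wl_lf (InN a x) = wl_nl a \<union> {x}"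
| "wl_lf (InW x a) = {x} \<union> wl_nl a"
| "wl_lf (Sub a b) = wl_nl a \<union> wl_nl b"
| "wl_lf (Lab x A) = {x}"
| "wl_lf (ExF a A) = wl_nl a"
| "wl_lf (AllF a A) = wl_nl a"
| "wl_lf (Cnd x a A B) = {x} \<union> wl_nl a"

fun nv_lf :: "lf \<Rightarrow> nat set" where
  "nv_lf (InN a x) = nv_nl a"
| "nv_lf (InW x a) = nv_nl a"
| "nv_lf (Sub a b) = nv_nl a \<union> nv_nl b"
| "nv_lf (Lab x A) = {}"
| "nv_lf (ExF a A) = nv_nl a"
| "nv_lf (AllF a A) = nv_nl a"
| "nv_lf (Cnd x a A B) = nv_nl a"

definition wls :: "lf multiset \<Rightarrow> lf multiset \<Rightarrow> nat set" where
  "wls \<Gamma> \<Delta> = (\<Union>f\<in>set_mset \<Gamma> \<union> set_mset \<Delta>. wl_lf f)"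

definition nvs :: "lf multiset \<Rightarrow> lf multiset \<Rightarrow> nat set" where
  "nvs \<Gamma> \<Delta> = (\<Union>f\<in>set_mset \<Gamma> \<union> set_mset \<Delta>. nv_lf f)"

text \<open>Atomic formulas At(x) usable in the replacement rules: x:P, x \<in> a, a \<in> N(x), x \<in> {z}.\<close>

datatype atk = AtP nat | AtIn nl | AtN nl | AtSg nat

fun at :: "atk \<Rightarrow> nat \<Rightarrow> lf" where
  "at (AtP p) w = Lab w (Atom p)"
| "at (AtIn a) w = InW w a"
| "at (AtN a) w = InN a w"
| "at (AtSg z) w = InW w (Sg z)"

inductive deriv :: "lf multiset \<Rightarrow> lf multiset \<Rightarrow> bool" where
  init: "deriv (add_mset (Lab x (Atom p)) \<Gamma>) (add_mset (Lab x (Atom p)) \<Delta>)"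
| LBot: "deriv (add_mset (Lab x Bot) \<Gamma>) \<Delta>"
| LAnd: "deriv (add_mset (Lab x A) (add_mset (Lab x B) \<Gamma>)) \<Delta> \<Longrightarrow>
         deriv (add_mset (Lab x (And A B)) \<Gamma>) \<Delta>"
| RAnd: "deriv \<Gamma> (add_mset (Lab x A) \<Delta>) \<Longrightarrow> deriv \<Gamma> (add_mset (Lab x B) \<Delta>) \<Longrightarrow>
         deriv \<Gamma> (add_mset (Lab x (And A B)) \<Delta>)"
| LOr: "deriv (add_mset (Lab x A) \<Gamma>) \<Delta> \<Longrightarrow> deriv (add_mset (Lab x B) \<Gamma>) \<Delta> \<Longrightarrow>
        deriv (add_mset (Lab x (Or A B)) \<Gamma>) \<Delta>"
| ROr: "deriv \<Gamma> (add_mset (Lab x A) (add_mset (Lab x B) \<Delta>)) \<Longrightarrow>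
        deriv \<Gamma> (add_mset (Lab x (Or A B)) \<Delta>)"
| LImp: "deriv \<Gamma> (add_mset (Lab x A) \<Delta>) \<Longrightarrow> deriv (add_mset (Lab x B) \<Gamma>) \<Delta> \<Longrightarrow>
         deriv (add_mset (Lab x (Imp A B)) \<Gamma>) \<Delta>"
| RImp: "deriv (add_mset (Lab x A) \<Gamma>) (add_mset (Lab x B) \<Delta>) \<Longrightarrow>
         deriv \<Gamma> (add_mset (Lab x (Imp A B)) \<Delta>)"
| LAll: "deriv (add_mset (Lab x A) (add_mset (InW x a) (add_mset (AllF a A) \<Gamma>))) \<Delta> \<Longrightarrow>
         deriv (add_mset (InW x a) (add_mset (AllF a A) \<Gamma>)) \<Delta>"
| RAll: "deriv (add_mset (InW x a) \<Gamma>) (add_mset (Lab x A) \<Delta>) \<Longrightarrow>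
         x \<notin> wls \<Gamma> (add_mset (AllF a A) \<Delta>) \<Longrightarrow>
         deriv \<Gamma> (add_mset (AllF a A) \<Delta>)"
| LEx: "deriv (add_mset (InW x a) (add_mset (Lab x A) \<Gamma>)) \<Delta> \<Longrightarrow>
        x \<notin> wls (add_mset (ExF a A) \<Gamma>) \<Delta> \<Longrightarrow>
        deriv (add_mset (ExF a A) \<Gamma>) \<Delta>"
| REx: "deriv (add_mset (InW x a) \<Gamma>) (add_mset (Lab x A) (add_mset (ExF a A) \<Delta>)) \<Longrightarrow>
        deriv (add_mset (InW x a) \<Gamma>) (add_mset (ExF a A) \<Delta>)"
| RCond: "deriv (add_mset (InN (NV n) x) (add_mset (ExF (NV n) A) \<Gamma>))
                (add_mset (Cnd x (NV n) A B) \<Delta>) \<Longrightarrow>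
          n \<notin> nvs \<Gamma> (add_mset (Lab x (Cond A B)) \<Delta>) \<Longrightarrow>
          deriv \<Gamma> (add_mset (Lab x (Cond A B)) \<Delta>)"
| LCond: "deriv (add_mset (InN a x) (add_mset (Lab x (Cond A B)) \<Gamma>)) (add_mset (ExF a A) \<Delta>) \<Longrightarrow>
          deriv (add_mset (Cnd x a A B) (add_mset (InN a x) (add_mset (Lab x (Cond A B)) \<Gamma>))) \<Delta> \<Longrightarrow>
          deriv (add_mset (InN a x) (add_mset (Lab x (Cond A B)) \<Gamma>)) \<Delta>"
| RBar: "deriv (add_mset (InN c x) (add_mset (Sub c a) \<Gamma>))
               (add_mset (Cnd x a A B) (add_mset (ExF c A) \<Delta>)) \<Longrightarrow>
         deriv (add_mset (InN c x) (add_mset (Sub c a) \<Gamma>))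
               (add_mset (Cnd x a A B) (add_mset (AllF c (Imp A B)) \<Delta>)) \<Longrightarrow>
         deriv (add_mset (InN c x) (add_mset (Sub c a) \<Gamma>)) (add_mset (Cnd x a A B) \<Delta>)"
| LBar: "deriv (add_mset (InN (NV n) x) (add_mset (Sub (NV n) a)
                 (add_mset (ExF (NV n) A) (add_mset (AllF (NV n) (Imp A B)) \<Gamma>)))) \<Delta> \<Longrightarrow>
         n \<notin> nvs (add_mset (Cnd x a A B) \<Gamma>) \<Delta> \<Longrightarrow>
         deriv (add_mset (Cnd x a A B) \<Gamma>) \<Delta>"
| Ref: "deriv (add_mset (Sub a a) \<Gamma>) \<Delta> \<Longrightarrow> deriv \<Gamma> \<Delta>"
| Tr: "deriv (add_mset (Sub c a) (add_mset (Sub c b) (add_mset (Sub b a) \<Gamma>))) \<Delta> \<Longrightarrow>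
       deriv (add_mset (Sub c b) (add_mset (Sub b a) \<Gamma>)) \<Delta>"
| LSub: "deriv (add_mset (InW x a) (add_mset (Sub a b) (add_mset (InW x b) \<Gamma>))) \<Delta> \<Longrightarrow>
         deriv (add_mset (InW x a) (add_mset (Sub a b) \<Gamma>)) \<Delta>"
| RuleN: "deriv (add_mset (InN (NV n) x) \<Gamma>) \<Delta> \<Longrightarrow> n \<notin> nvs \<Gamma> \<Delta> \<Longrightarrow> deriv \<Gamma> \<Delta>"
| Rule0: "deriv (add_mset (InW y a) (add_mset (InN a x) \<Gamma>)) \<Delta> \<Longrightarrow>
          y \<notin> wls (add_mset (InN a x) \<Gamma>) \<Delta> \<Longrightarrow>
          deriv (add_mset (InN a x) \<Gamma>) \<Delta>"
| RuleT: "deriv (add_mset (InW x (NV n)) (add_mset (InN (NV n) x) \<Gamma>)) \<Delta> \<Longrightarrow>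
          n \<notin> nvs \<Gamma> \<Delta> \<Longrightarrow> deriv \<Gamma> \<Delta>"
| RuleW: "deriv (add_mset (InW x a) (add_mset (InN a x) \<Gamma>)) \<Delta> \<Longrightarrow>
          deriv (add_mset (InN a x) \<Gamma>) \<Delta>"
| Single: "deriv (add_mset (InW x (Sg x)) (add_mset (InN (Sg x) x) \<Gamma>)) \<Delta> \<Longrightarrow>
           deriv (add_mset (InN (Sg x) x) \<Gamma>) \<Delta>"
| RuleC: "deriv (add_mset (InN (Sg x) x) (add_mset (Sub (Sg x) a) (add_mset (InN a x) \<Gamma>))) \<Delta> \<Longrightarrow>
          deriv (add_mset (InN a x) \<Gamma>) \<Delta>"
| Repl1: "deriv (add_mset (InW y (Sg x)) (add_mset (at k x) (add_mset (at k y) \<Gamma>))) \<Delta> \<Longrightarrow>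
          deriv (add_mset (InW y (Sg x)) (add_mset (at k x) \<Gamma>)) \<Delta>"
| Repl2: "deriv (add_mset (InW y (Sg x)) (add_mset (at k x) (add_mset (at k y) \<Gamma>))) \<Delta> \<Longrightarrow>
          deriv (add_mset (InW y (Sg x)) (add_mset (at k y) \<Gamma>)) \<Delta>"

end

theory Submission
  imports Defs "HOL-Library.Countable"
begin

(* If \<Rightarrow> x:A is not derivable, apply all instances of the rules of CL^C backwards in a fair
   order, each time keeping an underivable premiss.  The labelled formulas met along this branch
   form a saturated pair (G, D), from which a centered neighbourhood model is read off: worlds are
   (tagged copies of) the classes of world labels under the equivalence generated by y \<in> {x},
   and the neighbourhoods of x are {x} together with the extents of the labels a with a \<in> N(x)
   in G, each enlarged by x.  A truth lemma shows that every formula labelled x in G holds at x and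
   every one in D fails there; in particular A fails at x. *)

instance nl :: countable
  by countable_datatype

instance fm :: countable
  by countable_datatype

section \<open>Saturated pairs and their countermodels\<close>

locale saturated_pair =
  fixes G D :: "lf set"
  assumes sat_init: "Lab x (Atom p) \<in> G \<Longrightarrow> Lab x (Atom p) \<notin> D"
    and sat_LBot: "Lab x Bot \<notin> G"
    and sat_LAnd: "Lab x (And A B) \<in> G \<Longrightarrow> Lab x A \<in> G \<and> Lab x B \<in> G"
    and sat_RAnd: "Lab x (And A B) \<in> D \<Longrightarrow> Lab x A \<in> D \<or> Lab x B \<in> D"
    and sat_LOr: "Lab x (Or A B) \<in> G \<Longrightarrow> Lab x A \<in> G \<or> Lab x B \<in> G"
    and sat_ROr: "Lab x (Or A B) \<in> D \<Longrightarrow> Lab x A \<in> D \<and> Lab x B \<in> D"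
    and sat_LImp: "Lab x (Imp A B) \<in> G \<Longrightarrow> Lab x A \<in> D \<or> Lab x B \<in> G"
    and sat_RImp: "Lab x (Imp A B) \<in> D \<Longrightarrow> Lab x A \<in> G \<and> Lab x B \<in> D"
    and sat_LAll: "InW y a \<in> G \<Longrightarrow> AllF a A \<in> G \<Longrightarrow> Lab y A \<in> G"
    and sat_RAll: "AllF a A \<in> D \<Longrightarrow> \<exists>y. InW y a \<in> G \<and> Lab y A \<in> D"
    and sat_LEx: "ExF a A \<in> G \<Longrightarrow> \<exists>y. InW y a \<in> G \<and> Lab y A \<in> G"
    and sat_REx: "InW y a \<in> G \<Longrightarrow> ExF a A \<in> D \<Longrightarrow> Lab y A \<in> D"
    and sat_RCond: "Lab x (Cond A B) \<in> D \<Longrightarrow>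
      \<exists>n. InN (NV n) x \<in> G \<and> ExF (NV n) A \<in> G \<and> Cnd x (NV n) A B \<in> D"
    and sat_LCond: "InN a x \<in> G \<Longrightarrow> Lab x (Cond A B) \<in> G \<Longrightarrow> ExF a A \<in> D \<or> Cnd x a A B \<in> G"
    and sat_RBar: "InN c x \<in> G \<Longrightarrow> Sub c a \<in> G \<Longrightarrow> Cnd x a A B \<in> D \<Longrightarrow>
      ExF c A \<in> D \<or> AllF c (Imp A B) \<in> D"
    and sat_LBar: "Cnd x a A B \<in> G \<Longrightarrow>
      \<exists>n. InN (NV n) x \<in> G \<and> Sub (NV n) a \<in> G \<and> ExF (NV n) A \<in> G \<and> AllF (NV n) (Imp A B) \<in> G"
    and sat_Ref: "Sub a a \<in> G"
    and sat_Tr: "Sub c b \<in> G \<Longrightarrow> Sub b a \<in> G \<Longrightarrow> Sub c a \<in> G"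
    and sat_LSub: "InW y a \<in> G \<Longrightarrow> Sub a b \<in> G \<Longrightarrow> InW y b \<in> G"
    and sat_N: "\<exists>a. InN a x \<in> G"
    and sat_W: "InN a x \<in> G \<Longrightarrow> InW x a \<in> G"
    and sat_C: "InN a x \<in> G \<Longrightarrow> InN (Sg x) x \<in> G \<and> Sub (Sg x) a \<in> G"
    and sat_Repl_Atom: "InW y (Sg x) \<in> G \<Longrightarrow> Lab x (Atom p) \<in> G \<longleftrightarrow> Lab y (Atom p) \<in> G"
    and sat_Repl_N: "InW y (Sg x) \<in> G \<Longrightarrow> InN a x \<in> G \<longleftrightarrow> InN a y \<in> G"

(* A world is the code of a class representative r with a tag.  The copies tagged Some (c, b)
   lie in the extent of c and of every label above it, so an inclusion of neighbourhoods reflects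
   the corresponding relational atom (see Cond_in_D); two values of b make sure that one of them
   differs from any given world. *)

type_synonym tag = "(nl \<times> bool) option"

definition world :: "nat \<Rightarrow> tag \<Rightarrow> nat" where
  "world r t = to_nat (r, t)"

definition world_class :: "nat \<Rightarrow> nat" where
  "world_class w = fst (from_nat w :: nat \<times> tag)"

lemma world_eq_iff [simp]: "world r t = world r' t' \<longleftrightarrow> r = r' \<and> t = t'"
  by (simp add: world_def inj_eq[OF inj_to_nat])

lemma world_class_world [simp]: "world_class (world r t) = r"
  by (simp add: world_def world_class_def)

context saturated_pair
begin

definition same_class :: "nat \<Rightarrow> nat \<Rightarrow> bool" where
  "same_class = equivclp (\<lambda>y x. InW y (Sg x) \<in> G)"

definition rep :: "nat \<Rightarrow> nat" where
  "rep z = (LEAST z'. same_class z z')"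

lemma equivp_same_class: "equivp same_class"
  by (simp add: same_class_def)

lemma same_class_rep: "same_class z (rep z)"
  unfolding rep_def by (rule LeastI[of _ z]) (rule equivp_reflp[OF equivp_same_class])

lemma rep_eq_iff: "rep z = rep z' \<longleftrightarrow> same_class z z'"
proof
  assume "rep z = rep z'"
  then show "same_class z z'"
    using same_class_rep[of z] same_class_rep[of z'] equivp_same_class
    by (metis equivp_symp equivp_transp)
next
  assume "same_class z z'"
  then have "same_class z = same_class z'"
    using equivp_same_class by (simp add: equivp_def)
  then show "rep z = rep z'" by (simp add: rep_def)
qed

lemma rep_eq_if_singleton: "InW y (Sg x) \<in> G \<Longrightarrow> rep y = rep x"
  by (auto simp: rep_eq_iff same_class_def)

lemma same_class_invariant:
  assumes "same_class z z'" and "\<And>y x. InW y (Sg x) \<in> G \<Longrightarrow> P x \<longleftrightarrow> P y"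
  shows "P z \<longleftrightarrow> P z'"
  using assms(1) unfolding same_class_def
  by (induction rule: equivclp_induct) (use assms(2) in metis)+

lemma Atom_rep_invariant: "rep z = rep z' \<Longrightarrow> Lab z (Atom p) \<in> G \<longleftrightarrow> Lab z' (Atom p) \<in> G"
  using same_class_invariant[of z z' "\<lambda>x. Lab x (Atom p) \<in> G"] sat_Repl_Atom by (simp add: rep_eq_iff)

lemma InN_rep_invariant: "rep z = rep z' \<Longrightarrow> InN a z \<in> G \<longleftrightarrow> InN a z' \<in> G"
  using same_class_invariant[of z z' "\<lambda>x. InN a x \<in> G"] sat_Repl_N by (simp add: rep_eq_iff)

definition extent :: "nl \<Rightarrow> nat set" where
  "extent a = {world (rep y) None | y. InW y a \<in> G} \<union>
     {world (rep x) (Some (c, b)) | x c b. InN c x \<in> G \<and> Sub c a \<in> G}"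

definition nbhds :: "nat \<Rightarrow> nat set set" where
  "nbhds w = insert {w} {extent a \<union> {w} | a x. InN a x \<in> G \<and> world_class w = rep x}"

definition val :: "nat \<Rightarrow> nat set" where
  "val p = {w. \<exists>z. Lab z (Atom p) \<in> G \<and> world_class w = rep z}"

definition countermodel :: "nat nmodel" where
  "countermodel = \<lparr>W = UNIV, Nb = nbhds, V = val\<rparr>"

lemma countermodel_simps [simp]:
  "W countermodel = UNIV" "Nb countermodel = nbhds" "V countermodel = val"
  by (simp_all add: countermodel_def)

lemma nmodel_countermodel: "nmodel countermodel"
  by (auto simp: nmodel_def nbhds_def)

lemma centering_countermodel: "centering countermodel"
  by (auto simp: centering_def nbhds_def)

lemma world_in_extent: "InW y a \<in> G \<Longrightarrow> world (rep y) None \<in> extent a"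
  by (auto simp: extent_def)

lemma tagged_world_in_extent: "InN c x \<in> G \<Longrightarrow> world (rep x) (Some (c, b)) \<in> extent c"
  using sat_Ref by (auto simp: extent_def)

lemma extent_cases:
  assumes "v \<in> extent a"
  obtains y t where "InW y a \<in> G" and "v = world (rep y) t"
proof -
  from assms consider y where "InW y a \<in> G" "v = world (rep y) None"
    | x c b where "InN c x \<in> G" "Sub c a \<in> G" "v = world (rep x) (Some (c, b))"
    unfolding extent_def by blast
  then show thesis by cases (use that sat_W sat_LSub in blast)+
qed

lemma extent_mono: "Sub c a \<in> G \<Longrightarrow> extent c \<subseteq> extent a"
  unfolding extent_def by (blast intro: sat_LSub sat_Tr)

lemma Sub_if_tagged_world_in_extent:
  "world r (Some (c, b)) \<in> extent a \<Longrightarrow> Sub c a \<in> G"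
  by (auto simp: extent_def)

lemma nbhds_world_iff:
  "\<alpha> \<in> nbhds (world (rep x) t) \<longleftrightarrow>
     \<alpha> = {world (rep x) t} \<or> (\<exists>a. InN a x \<in> G \<and> \<alpha> = extent a \<union> {world (rep x) t})"
proof -
  have "(\<exists>x'. InN a x' \<in> G \<and> rep x = rep x') \<longleftrightarrow> InN a x \<in> G" for a
    using InN_rep_invariant by blast
  then show ?thesis unfolding nbhds_def by auto
qed

lemma singleton_nbhd_label: "InN (Sg x) x \<in> G" "InW x (Sg x) \<in> G"
  using sat_N[of x] sat_C sat_W by blast+

lemma forces_Atom_iff: "forces countermodel (world (rep z) t) (Atom p) \<longleftrightarrow> Lab z (Atom p) \<in> G"
  by (simp add: val_def) (metis Atom_rep_invariant)

definition truthful :: "fm \<Rightarrow> bool" where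
  "truthful A \<longleftrightarrow> (\<forall>z t.
     (Lab z A \<in> G \<longrightarrow> forces countermodel (world (rep z) t) A) \<and>
     (Lab z A \<in> D \<longrightarrow> \<not> forces countermodel (world (rep z) t) A))"

lemma truthfulI:
  assumes "\<And>z t. Lab z A \<in> G \<Longrightarrow> forces countermodel (world (rep z) t) A"
    and "\<And>z t. Lab z A \<in> D \<Longrightarrow> \<not> forces countermodel (world (rep z) t) A"
  shows "truthful A"
  using assms by (simp add: truthful_def)

lemma truthfulD:
  assumes "truthful A"
  shows "Lab z A \<in> G \<Longrightarrow> forces countermodel (world (rep z) t) A"
    and "Lab z A \<in> D \<Longrightarrow> \<not> forces countermodel (world (rep z) t) A"
  using assms by (simp_all add: truthful_def)

lemma AllF_Imp_world:
  assumes "truthful A" "truthful B" "AllF a (Imp A B) \<in> G" "InW y a \<in> G"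
    and "forces countermodel (world (rep y) t) A"
  shows "forces countermodel (world (rep y) t) B"
  using sat_LImp[OF sat_LAll[OF assms(4,3)]] truthfulD[OF assms(1)] truthfulD[OF assms(2)] assms(5)
  by blast

lemma AllF_Imp_extent:
  assumes "truthful A" "truthful B" "AllF a (Imp A B) \<in> G" "v \<in> extent a"
    and "forces countermodel v A"
  shows "forces countermodel v B"
  using assms(4) by (rule extent_cases) (use AllF_Imp_world assms in blast)

lemma ExF_world:
  assumes "truthful A" "ExF a A \<in> D" "InW y a \<in> G"
  shows "\<not> forces countermodel (world (rep y) t) A"
  using truthfulD(2)[OF assms(1) sat_REx[OF assms(3,2)]] .

lemma ExF_extent:
  assumes "truthful A" "ExF a A \<in> D" "v \<in> extent a"
  shows "\<not> forces countermodel v A"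
  using assms(3) by (rule extent_cases) (use ExF_world assms in blast)

lemma ExF_witness:
  assumes "truthful A" "ExF a A \<in> G"
  shows "\<exists>v \<in> extent a. forces countermodel v A"
  using sat_LEx[OF assms(2)] world_in_extent truthfulD(1)[OF assms(1)] by blast

lemma Cond_in_G_singleton:
  assumes "truthful A" "truthful B" "Lab z (Cond A B) \<in> G"
    and "forces countermodel (world (rep z) t) A"
  shows "forces countermodel (world (rep z) t) B"
  using sat_LCond[OF singleton_nbhd_label(1) assms(3)]
proof
  assume "ExF (Sg z) A \<in> D"
  then show ?thesis using ExF_world[OF assms(1) _ singleton_nbhd_label(2)] assms(4) by blast
next
  assume "Cnd z (Sg z) A B \<in> G"
  then obtain n where n: "Sub (NV n) (Sg z) \<in> G" "ExF (NV n) A \<in> G" "AllF (NV n) (Imp A B) \<in> G"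
    using sat_LBar by blast
  then obtain y where y: "InW y (NV n) \<in> G" "Lab y A \<in> G"
    using sat_LEx by blast
  have "rep y = rep z"
    using rep_eq_if_singleton[OF sat_LSub[OF y(1) n(1)]] .
  then show ?thesis
    using AllF_Imp_world[OF assms(1,2) n(3) y(1)] truthfulD(1)[OF assms(1) y(2)] by metis
qed

lemma Cond_in_G_extent:
  assumes "truthful A" "truthful B" "Lab z (Cond A B) \<in> G" "InN a z \<in> G"
    and "\<exists>v \<in> extent a \<union> {world (rep z) t}. forces countermodel v A"
  shows "\<exists>\<beta> \<in> nbhds (world (rep z) t). \<beta> \<subseteq> extent a \<union> {world (rep z) t} \<and>
           (\<exists>v \<in> \<beta>. forces countermodel v A) \<and>
           (\<forall>v \<in> \<beta>. forces countermodel v A \<longrightarrow> forces countermodel v B)"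
  using sat_LCond[OF assms(4,3)]
proof
  assume "ExF a A \<in> D"
  then show ?thesis
    using assms(5) ExF_extent[OF assms(1)] ExF_world[OF assms(1) _ sat_W[OF assms(4)]] by blast
next
  assume "Cnd z a A B \<in> G"
  then obtain n where n: "InN (NV n) z \<in> G" "Sub (NV n) a \<in> G" "ExF (NV n) A \<in> G"
      "AllF (NV n) (Imp A B) \<in> G"
    using sat_LBar by blast
  let ?\<beta> = "extent (NV n) \<union> {world (rep z) t}"
  have "?\<beta> \<in> nbhds (world (rep z) t)"
    using n(1) nbhds_world_iff by blast
  moreover have "?\<beta> \<subseteq> extent a \<union> {world (rep z) t}"
    using extent_mono[OF n(2)] by blast
  moreover have "\<exists>v \<in> ?\<beta>. forces countermodel v A"
    using ExF_witness[OF assms(1) n(3)] by blast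
  moreover have "\<forall>v \<in> ?\<beta>. forces countermodel v A \<longrightarrow> forces countermodel v B"
    using AllF_Imp_extent[OF assms(1,2) n(4)] AllF_Imp_world[OF assms(1,2) n(4) sat_W[OF n(1)]]
    by blast
  ultimately show ?thesis by blast
qed

lemma Cond_in_G:
  assumes "truthful A" "truthful B" "Lab z (Cond A B) \<in> G"
  shows "forces countermodel (world (rep z) t) (Cond A B)"
proof -
  let ?w = "world (rep z) t"
  have "\<exists>\<beta> \<in> nbhds ?w. \<beta> \<subseteq> \<alpha> \<and> (\<exists>v \<in> \<beta>. forces countermodel v A) \<and>
          (\<forall>v \<in> \<beta>. forces countermodel v A \<longrightarrow> forces countermodel v B)"
    if "\<alpha> \<in> nbhds ?w" and A: "\<exists>v \<in> \<alpha>. forces countermodel v A" for \<alpha>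
    using that(1) unfolding nbhds_world_iff
  proof
    assume "\<alpha> = {?w}"
    then show ?thesis
      using A Cond_in_G_singleton[OF assms] nbhds_world_iff by auto
  next
    assume "\<exists>a. InN a z \<in> G \<and> \<alpha> = extent a \<union> {?w}"
    then show ?thesis
      using A Cond_in_G_extent[OF assms] by blast
  qed
  then show ?thesis by simp
qed

lemma Cond_in_D_singleton:
  assumes "truthful A" "truthful B" "InN a z \<in> G" "Cnd z a A B \<in> D"
  shows "\<not> (forces countermodel (world (rep z) t) A \<and> forces countermodel (world (rep z) t) B)"
proof -
  have "Sub (Sg z) a \<in> G"
    using sat_C[OF assms(3)] by blast
  from sat_RBar[OF singleton_nbhd_label(1) this assms(4)] show ?thesis
  proof
    assume "ExF (Sg z) A \<in> D"
    then show ?thesis using ExF_world[OF assms(1) _ singleton_nbhd_label(2)] by blast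
  next
    assume "AllF (Sg z) (Imp A B) \<in> D"
    then obtain u where "InW u (Sg z) \<in> G" "Lab u (Imp A B) \<in> D"
      using sat_RAll by blast
    then show ?thesis
      using rep_eq_if_singleton sat_RImp truthfulD(2)[OF assms(2)] by metis
  qed
qed

lemma Cond_in_D_extent:
  assumes "truthful A" "truthful B" "InN a z \<in> G" "Cnd z a A B \<in> D" "InN c z \<in> G" "Sub c a \<in> G"
  shows "\<not> ((\<exists>v \<in> extent c \<union> {world (rep z) t}. forces countermodel v A) \<and>
            (\<forall>v \<in> extent c \<union> {world (rep z) t}. forces countermodel v A \<longrightarrow> forces countermodel v B))"
  using sat_RBar[OF assms(5,6,4)]
proof
  assume "ExF c A \<in> D"
  then show ?thesis
    using ExF_extent[OF assms(1)] ExF_world[OF assms(1) _ sat_W[OF assms(5)]] by blast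
next
  assume "AllF c (Imp A B) \<in> D"
  then obtain u where u: "InW u c \<in> G" "Lab u (Imp A B) \<in> D"
    using sat_RAll by blast
  then show ?thesis
    using world_in_extent[OF u(1)] sat_RImp[OF u(2)] truthfulD[OF assms(1)] truthfulD[OF assms(2)]
    by blast
qed

lemma Cond_in_D:
  assumes "truthful A" "truthful B" "Lab z (Cond A B) \<in> D"
  shows "\<not> forces countermodel (world (rep z) t) (Cond A B)"
proof
  let ?w = "world (rep z) t"
  assume Cond: "forces countermodel ?w (Cond A B)"
  obtain n where n: "InN (NV n) z \<in> G" "ExF (NV n) A \<in> G" "Cnd z (NV n) A B \<in> D"
    using sat_RCond[OF assms(3)] by blast
  let ?\<alpha> = "extent (NV n) \<union> {?w}"
  have "?\<alpha> \<in> nbhds ?w" "\<exists>v \<in> ?\<alpha>. forces countermodel v A"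
    using n(1) nbhds_world_iff ExF_witness[OF assms(1) n(2)] by blast+
  moreover have "\<forall>\<alpha> \<in> nbhds ?w. (\<exists>v \<in> \<alpha>. forces countermodel v A) \<longrightarrow>
      (\<exists>\<beta> \<in> nbhds ?w. \<beta> \<subseteq> \<alpha> \<and> (\<exists>v \<in> \<beta>. forces countermodel v A) \<and>
         (\<forall>v \<in> \<beta>. forces countermodel v A \<longrightarrow> forces countermodel v B))"
    using Cond by simp
  ultimately obtain \<beta> where \<beta>: "\<beta> \<in> nbhds ?w" "\<beta> \<subseteq> ?\<alpha>"
      "\<exists>v \<in> \<beta>. forces countermodel v A" "\<forall>v \<in> \<beta>. forces countermodel v A \<longrightarrow> forces countermodel v B"
    by blast
  from \<beta>(1) consider "\<beta> = {?w}" | c where "InN c z \<in> G" "\<beta> = extent c \<union> {?w}"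
    unfolding nbhds_world_iff by blast
  then show False
  proof cases
    case 1
    then show False using \<beta>(3,4) Cond_in_D_singleton[OF assms(1,2) n(1,3)] by auto
  next
    case (2 c)
    \<comment> \<open>a tagged copy of z in extent c other than the world itself witnesses c \<subseteq> NV n\<close>
    obtain b where "world (rep z) (Some (c, b)) \<noteq> ?w"
      by (metis option.inject prod.inject world_eq_iff)
    moreover have "world (rep z) (Some (c, b)) \<in> ?\<alpha>"
      using tagged_world_in_extent[OF 2(1)] 2(2) \<beta>(2) by blast
    ultimately have "Sub c (NV n) \<in> G"
      using Sub_if_tagged_world_in_extent by blast
    then show False
      using Cond_in_D_extent[OF assms(1,2) n(1,3) 2(1)] 2(2) \<beta>(3,4) by blast
  qed
qed

theorem truth_lemma: "truthful A"
proof (induction A)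
  case (Atom p)
  show ?case
    by (rule truthfulI) (use forces_Atom_iff sat_init in blast)+
next
  case Bot
  show ?case
    by (rule truthfulI) (use sat_LBot in simp_all)
next
  case (And A B)
  note IH = truthfulD[OF And.IH(1)] truthfulD[OF And.IH(2)]
  show ?case
  proof (rule truthfulI)
    fix z t
    show "forces countermodel (world (rep z) t) (And A B)" if "Lab z (And A B) \<in> G"
      using sat_LAnd[OF that] IH by simp
    show "\<not> forces countermodel (world (rep z) t) (And A B)" if "Lab z (And A B) \<in> D"
      using sat_RAnd[OF that] IH by auto
  qed
next
  case (Or A B)
  note IH = truthfulD[OF Or.IH(1)] truthfulD[OF Or.IH(2)]
  show ?case
  proof (rule truthfulI)
    fix z t
    show "forces countermodel (world (rep z) t) (Or A B)" if "Lab z (Or A B) \<in> G"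
      using sat_LOr[OF that] IH by auto
    show "\<not> forces countermodel (world (rep z) t) (Or A B)" if "Lab z (Or A B) \<in> D"
      using sat_ROr[OF that] IH by simp
  qed
next
  case (Imp A B)
  note IH = truthfulD[OF Imp.IH(1)] truthfulD[OF Imp.IH(2)]
  show ?case
  proof (rule truthfulI)
    fix z t
    show "forces countermodel (world (rep z) t) (Imp A B)" if "Lab z (Imp A B) \<in> G"
      using sat_LImp[OF that] IH by auto
    show "\<not> forces countermodel (world (rep z) t) (Imp A B)" if "Lab z (Imp A B) \<in> D"
      using sat_RImp[OF that] IH by simp
  qed
next
  case (Cond A B)
  show ?case
    by (rule truthfulI) (use Cond_in_G[OF Cond.IH] Cond_in_D[OF Cond.IH] in blast)+
qed

end

section \<open>Proof search\<close>

type_synonym sequent = "lf multiset \<times> lf multiset"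

abbreviation derivable :: "sequent \<Rightarrow> bool" where
  "derivable s \<equiv> deriv (fst s) (snd s)"

lemma finite_wl_nl [simp]: "finite (wl_nl a)"
  by (cases a) simp_all

lemma finite_wl_lf [simp]: "finite (wl_lf f)"
  by (cases f) simp_all

lemma finite_nv_nl [simp]: "finite (nv_nl a)"
  by (cases a) simp_all

lemma finite_nv_lf [simp]: "finite (nv_lf f)"
  by (cases f) simp_all

definition fresh_wl :: "lf multiset \<Rightarrow> lf multiset \<Rightarrow> nat" where
  "fresh_wl \<Gamma> \<Delta> = (LEAST y. y \<notin> wls \<Gamma> \<Delta>)"

definition fresh_nv :: "lf multiset \<Rightarrow> lf multiset \<Rightarrow> nat" where
  "fresh_nv \<Gamma> \<Delta> = (LEAST n. n \<notin> nvs \<Gamma> \<Delta>)"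

lemma Least_notin_finite:
  assumes "finite (S :: nat set)"
  shows "(LEAST n. n \<notin> S) \<notin> S"
proof -
  obtain n where "n \<notin> S"
    using ex_new_if_finite[OF infinite_UNIV_nat assms] by blast
  then show ?thesis by (rule LeastI)
qed

lemma fresh_wl_notin: "fresh_wl \<Gamma> \<Delta> \<notin> wls \<Gamma> \<Delta>"
  unfolding fresh_wl_def by (rule Least_notin_finite) (simp add: wls_def)

lemma fresh_nv_notin: "fresh_nv \<Gamma> \<Delta> \<notin> nvs \<Gamma> \<Delta>"
  unfolding fresh_nv_def by (rule Least_notin_finite) (simp add: nvs_def)

(* Rules 0, T and Single and the replacement rules for x \<in> a and x \<in> {z} are never applied
   by the search: the countermodel does not need them. *)

datatype rule_inst =
    ILAnd nat fm fm | IRAnd nat fm fm | ILOr nat fm fm | IROr nat fm fm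
  | ILImp nat fm fm | IRImp nat fm fm
  | ILAll nat nl fm | IRAll nl fm | ILEx nl fm | IREx nat nl fm
  | IRCond nat fm fm | ILCond nl nat fm fm | IRBar nl nat nl fm fm | ILBar nat nl fm fm
  | IRef nl | ITr nl nl nl | ILSub nat nl nl | IN nat | IW nl nat | IC nl nat
  | IRepl1_At nat nat nat | IRepl2_At nat nat nat | IRepl1_N nat nat nl | IRepl2_N nat nat nl

fun applicable :: "rule_inst \<Rightarrow> sequent \<Rightarrow> bool" where
  "applicable (ILAnd x A B) (\<Gamma>, \<Delta>) \<longleftrightarrow> Lab x (And A B) \<in># \<Gamma>"
| "applicable (IRAnd x A B) (\<Gamma>, \<Delta>) \<longleftrightarrow> Lab x (And A B) \<in># \<Delta>"
| "applicable (ILOr x A B) (\<Gamma>, \<Delta>) \<longleftrightarrow> Lab x (Or A B) \<in># \<Gamma>"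
| "applicable (IROr x A B) (\<Gamma>, \<Delta>) \<longleftrightarrow> Lab x (Or A B) \<in># \<Delta>"
| "applicable (ILImp x A B) (\<Gamma>, \<Delta>) \<longleftrightarrow> Lab x (Imp A B) \<in># \<Gamma>"
| "applicable (IRImp x A B) (\<Gamma>, \<Delta>) \<longleftrightarrow> Lab x (Imp A B) \<in># \<Delta>"
| "applicable (ILAll y a A) (\<Gamma>, \<Delta>) \<longleftrightarrow> InW y a \<in># \<Gamma> \<and> AllF a A \<in># \<Gamma>"
| "applicable (IRAll a A) (\<Gamma>, \<Delta>) \<longleftrightarrow> AllF a A \<in># \<Delta>"
| "applicable (ILEx a A) (\<Gamma>, \<Delta>) \<longleftrightarrow> ExF a A \<in># \<Gamma>"
| "applicable (IREx y a A) (\<Gamma>, \<Delta>) \<longleftrightarrow> InW y a \<in># \<Gamma> \<and> ExF a A \<in># \<Delta>"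
| "applicable (IRCond x A B) (\<Gamma>, \<Delta>) \<longleftrightarrow> Lab x (Cond A B) \<in># \<Delta>"
| "applicable (ILCond a x A B) (\<Gamma>, \<Delta>) \<longleftrightarrow> InN a x \<in># \<Gamma> \<and> Lab x (Cond A B) \<in># \<Gamma>"
| "applicable (IRBar c x a A B) (\<Gamma>, \<Delta>) \<longleftrightarrow> InN c x \<in># \<Gamma> \<and> Sub c a \<in># \<Gamma> \<and> Cnd x a A B \<in># \<Delta>"
| "applicable (ILBar x a A B) (\<Gamma>, \<Delta>) \<longleftrightarrow> Cnd x a A B \<in># \<Gamma>"
| "applicable (IRef a) (\<Gamma>, \<Delta>) \<longleftrightarrow> True"
| "applicable (ITr c b a) (\<Gamma>, \<Delta>) \<longleftrightarrow> Sub c b \<in># \<Gamma> \<and> Sub b a \<in># \<Gamma> \<and> Sub c b \<noteq> Sub b a"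
| "applicable (ILSub y a b) (\<Gamma>, \<Delta>) \<longleftrightarrow> InW y a \<in># \<Gamma> \<and> Sub a b \<in># \<Gamma>"
| "applicable (IN x) (\<Gamma>, \<Delta>) \<longleftrightarrow> True"
| "applicable (IW a x) (\<Gamma>, \<Delta>) \<longleftrightarrow> InN a x \<in># \<Gamma>"
| "applicable (IC a x) (\<Gamma>, \<Delta>) \<longleftrightarrow> InN a x \<in># \<Gamma>"
| "applicable (IRepl1_At y x p) (\<Gamma>, \<Delta>) \<longleftrightarrow> InW y (Sg x) \<in># \<Gamma> \<and> Lab x (Atom p) \<in># \<Gamma>"
| "applicable (IRepl2_At y x p) (\<Gamma>, \<Delta>) \<longleftrightarrow> InW y (Sg x) \<in># \<Gamma> \<and> Lab y (Atom p) \<in># \<Gamma>"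
| "applicable (IRepl1_N y x a) (\<Gamma>, \<Delta>) \<longleftrightarrow> InW y (Sg x) \<in># \<Gamma> \<and> InN a x \<in># \<Gamma>"
| "applicable (IRepl2_N y x a) (\<Gamma>, \<Delta>) \<longleftrightarrow> InW y (Sg x) \<in># \<Gamma> \<and> InN a y \<in># \<Gamma>"

fun premisses :: "rule_inst \<Rightarrow> sequent \<Rightarrow> sequent set" where
  "premisses (ILAnd x A B) (\<Gamma>, \<Delta>) =
     {(add_mset (Lab x A) (add_mset (Lab x B) (\<Gamma> - {#Lab x (And A B)#})), \<Delta>)}"
| "premisses (IRAnd x A B) (\<Gamma>, \<Delta>) =
     {(\<Gamma>, add_mset (Lab x A) (\<Delta> - {#Lab x (And A B)#})),
      (\<Gamma>, add_mset (Lab x B) (\<Delta> - {#Lab x (And A B)#}))}"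
| "premisses (ILOr x A B) (\<Gamma>, \<Delta>) =
     {(add_mset (Lab x A) (\<Gamma> - {#Lab x (Or A B)#}), \<Delta>),
      (add_mset (Lab x B) (\<Gamma> - {#Lab x (Or A B)#}), \<Delta>)}"
| "premisses (IROr x A B) (\<Gamma>, \<Delta>) =
     {(\<Gamma>, add_mset (Lab x A) (add_mset (Lab x B) (\<Delta> - {#Lab x (Or A B)#})))}"
| "premisses (ILImp x A B) (\<Gamma>, \<Delta>) =
     {(\<Gamma> - {#Lab x (Imp A B)#}, add_mset (Lab x A) \<Delta>),
      (add_mset (Lab x B) (\<Gamma> - {#Lab x (Imp A B)#}), \<Delta>)}"
| "premisses (IRImp x A B) (\<Gamma>, \<Delta>) =
     {(add_mset (Lab x A) \<Gamma>, add_mset (Lab x B) (\<Delta> - {#Lab x (Imp A B)#}))}"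
| "premisses (ILAll y a A) (\<Gamma>, \<Delta>) = {(add_mset (Lab y A) \<Gamma>, \<Delta>)}"
| "premisses (IRAll a A) (\<Gamma>, \<Delta>) =
     (let y = fresh_wl \<Gamma> \<Delta> in {(add_mset (InW y a) \<Gamma>, add_mset (Lab y A) (\<Delta> - {#AllF a A#}))})"
| "premisses (ILEx a A) (\<Gamma>, \<Delta>) =
     (let y = fresh_wl \<Gamma> \<Delta> in {(add_mset (InW y a) (add_mset (Lab y A) (\<Gamma> - {#ExF a A#})), \<Delta>)})"
| "premisses (IREx y a A) (\<Gamma>, \<Delta>) = {(\<Gamma>, add_mset (Lab y A) \<Delta>)}"
| "premisses (IRCond x A B) (\<Gamma>, \<Delta>) =
     (let n = fresh_nv \<Gamma> \<Delta> in
      {(add_mset (InN (NV n) x) (add_mset (ExF (NV n) A) \<Gamma>),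
        add_mset (Cnd x (NV n) A B) (\<Delta> - {#Lab x (Cond A B)#}))})"
| "premisses (ILCond a x A B) (\<Gamma>, \<Delta>) = {(\<Gamma>, add_mset (ExF a A) \<Delta>), (add_mset (Cnd x a A B) \<Gamma>, \<Delta>)}"
| "premisses (IRBar c x a A B) (\<Gamma>, \<Delta>) =
     {(\<Gamma>, add_mset (ExF c A) \<Delta>), (\<Gamma>, add_mset (AllF c (Imp A B)) \<Delta>)}"
| "premisses (ILBar x a A B) (\<Gamma>, \<Delta>) =
     (let n = fresh_nv \<Gamma> \<Delta> in
      {(add_mset (InN (NV n) x) (add_mset (Sub (NV n) a) (add_mset (ExF (NV n) A)
          (add_mset (AllF (NV n) (Imp A B)) (\<Gamma> - {#Cnd x a A B#})))), \<Delta>)})"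
| "premisses (IRef a) (\<Gamma>, \<Delta>) = {(add_mset (Sub a a) \<Gamma>, \<Delta>)}"
| "premisses (ITr c b a) (\<Gamma>, \<Delta>) = {(add_mset (Sub c a) \<Gamma>, \<Delta>)}"
| "premisses (ILSub y a b) (\<Gamma>, \<Delta>) = {(add_mset (InW y b) \<Gamma>, \<Delta>)}"
| "premisses (IN x) (\<Gamma>, \<Delta>) = {(add_mset (InN (NV (fresh_nv \<Gamma> \<Delta>)) x) \<Gamma>, \<Delta>)}"
| "premisses (IW a x) (\<Gamma>, \<Delta>) = {(add_mset (InW x a) \<Gamma>, \<Delta>)}"
| "premisses (IC a x) (\<Gamma>, \<Delta>) = {(add_mset (InN (Sg x) x) (add_mset (Sub (Sg x) a) \<Gamma>), \<Delta>)}"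
| "premisses (IRepl1_At y x p) (\<Gamma>, \<Delta>) = {(add_mset (Lab y (Atom p)) \<Gamma>, \<Delta>)}"
| "premisses (IRepl2_At y x p) (\<Gamma>, \<Delta>) = {(add_mset (Lab x (Atom p)) \<Gamma>, \<Delta>)}"
| "premisses (IRepl1_N y x a) (\<Gamma>, \<Delta>) = {(add_mset (InN a y) \<Gamma>, \<Delta>)}"
| "premisses (IRepl2_N y x a) (\<Gamma>, \<Delta>) = {(add_mset (InN a x) \<Gamma>, \<Delta>)}"

lemma mset_add2:
  assumes "a \<in># M" and "b \<in># M" and "a \<noteq> b"
  obtains R where "M = add_mset a (add_mset b R)"
  using assms by (metis insert_DiffM insert_noteq_member)

lemma derivable_if_premisses_derivable:
  assumes "applicable r (\<Gamma>, \<Delta>)" and "\<forall>p \<in> premisses r (\<Gamma>, \<Delta>). derivable p"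
  shows "deriv \<Gamma> \<Delta>"
proof (cases r)
  case (ILAnd x A B) with assms show ?thesis by (auto elim!: mset_add intro: deriv.LAnd)
next
  case (IRAnd x A B) with assms show ?thesis by (auto elim!: mset_add intro: deriv.RAnd)
next
  case (ILOr x A B) with assms show ?thesis by (auto elim!: mset_add intro: deriv.LOr)
next
  case (IROr x A B) with assms show ?thesis by (auto elim!: mset_add intro: deriv.ROr)
next
  case (ILImp x A B) with assms show ?thesis by (auto elim!: mset_add intro: deriv.LImp)
next
  case (IRImp x A B) with assms show ?thesis by (auto elim!: mset_add intro: deriv.RImp)
next
  case (ILAll y a A)
  with assms obtain R where "\<Gamma> = add_mset (InW y a) (add_mset (AllF a A) R)"
    by (auto elim: mset_add2)
  with ILAll assms(2) show ?thesis by (auto intro: deriv.LAll)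
next
  case (IRAll a A) with assms show ?thesis
    using fresh_wl_notin[of \<Gamma> \<Delta>] by (auto simp: Let_def elim!: mset_add intro: deriv.RAll)
next
  case (ILEx a A) with assms show ?thesis
    using fresh_wl_notin[of \<Gamma> \<Delta>] by (auto simp: Let_def elim!: mset_add intro: deriv.LEx)
next
  case (IREx y a A) with assms show ?thesis by (auto elim!: mset_add intro: deriv.REx)
next
  case (IRCond x A B) with assms show ?thesis
    using fresh_nv_notin[of \<Gamma> \<Delta>] by (auto simp: Let_def elim!: mset_add intro: deriv.RCond)
next
  case (ILCond a x A B)
  with assms obtain R where "\<Gamma> = add_mset (InN a x) (add_mset (Lab x (Cond A B)) R)"
    by (auto elim: mset_add2)
  with ILCond assms(2) show ?thesis by (auto intro: deriv.LCond)
next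
  case (IRBar c x a A B)
  with assms obtain R S where
    "\<Gamma> = add_mset (InN c x) (add_mset (Sub c a) R)" and "\<Delta> = add_mset (Cnd x a A B) S"
    by (metis applicable.simps(13) lf.distinct(3) mset_add mset_add2)
  with IRBar assms(2) show ?thesis using deriv.RBar[of c x a R A B S] by (auto simp: add_mset_commute)
next
  case (ILBar x a A B) with assms show ?thesis
    using fresh_nv_notin[of \<Gamma> \<Delta>] by (auto simp: Let_def elim!: mset_add intro: deriv.LBar)
next
  case (IRef a) with assms show ?thesis by (auto intro: deriv.Ref)
next
  case (ITr c b a)
  with assms obtain R where "\<Gamma> = add_mset (Sub c b) (add_mset (Sub b a) R)"
    by (auto elim: mset_add2)
  with ITr assms(2) show ?thesis by (auto intro: deriv.Tr)
next
  case (ILSub y a b)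
  with assms obtain R where "\<Gamma> = add_mset (InW y a) (add_mset (Sub a b) R)"
    by (auto elim: mset_add2)
  with ILSub assms(2) show ?thesis using deriv.LSub[of y a b R \<Delta>] by (auto simp: add_mset_commute)
next
  case (IN x) with assms show ?thesis
    using fresh_nv_notin[of \<Gamma> \<Delta>] by (auto intro: deriv.RuleN)
next
  case (IW a x) with assms show ?thesis by (auto elim!: mset_add intro: deriv.RuleW)
next
  case (IC a x) with assms show ?thesis by (auto elim!: mset_add intro: deriv.RuleC)
next
  case (IRepl1_At y x p)
  with assms obtain R where "\<Gamma> = add_mset (InW y (Sg x)) (add_mset (at (AtP p) x) R)"
    by (auto elim: mset_add2)
  with IRepl1_At assms(2) show ?thesis
    using deriv.Repl1[of y x "AtP p" R \<Delta>] by (auto simp: add_mset_commute)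
next
  case (IRepl2_At y x p)
  with assms obtain R where "\<Gamma> = add_mset (InW y (Sg x)) (add_mset (at (AtP p) y) R)"
    by (auto elim: mset_add2)
  with IRepl2_At assms(2) show ?thesis
    using deriv.Repl2[of y x "AtP p" R \<Delta>] by (auto simp: add_mset_commute)
next
  case (IRepl1_N y x a)
  with assms obtain R where "\<Gamma> = add_mset (InW y (Sg x)) (add_mset (at (AtN a) x) R)"
    by (auto elim: mset_add2)
  with IRepl1_N assms(2) show ?thesis
    using deriv.Repl1[of y x "AtN a" R \<Delta>] by (auto simp: add_mset_commute)
next
  case (IRepl2_N y x a)
  with assms obtain R where "\<Gamma> = add_mset (InW y (Sg x)) (add_mset (at (AtN a) y) R)"
    by (auto elim: mset_add2)
  with IRepl2_N assms(2) show ?thesis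
    using deriv.Repl2[of y x "AtN a" R \<Delta>] by (auto simp: add_mset_commute)
qed

instance rule_inst :: countable
  by countable_datatype

definition rule_at :: "nat \<Rightarrow> rule_inst" where
  "rule_at i = from_nat (fst (prod_decode i))"

lemma rule_at_infinitely_often: "\<exists>j \<ge> i. rule_at j = r"
proof -
  have "rule_at (prod_encode (to_nat r, i)) = r"
    by (simp add: rule_at_def)
  then show ?thesis
    using le_prod_encode_2 by blast
qed

datatype signed_lf = Lhs lf | Rhs lf

definition signed_set :: "sequent \<Rightarrow> signed_lf set" where
  "signed_set s = Lhs ` set_mset (fst s) \<union> Rhs ` set_mset (snd s)"

lemma in_signed_set_iff [simp]:
  "Lhs f \<in> signed_set s \<longleftrightarrow> f \<in># fst s" "Rhs f \<in> signed_set s \<longleftrightarrow> f \<in># snd s"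
  by (auto simp: signed_set_def)

(* The rule instance, if any, whose backward application deletes the formula from the sequent;
   every other formula persists along the search. *)

fun consumer :: "signed_lf \<Rightarrow> rule_inst option" where
  "consumer (Lhs (Lab x (And A B))) = Some (ILAnd x A B)"
| "consumer (Rhs (Lab x (And A B))) = Some (IRAnd x A B)"
| "consumer (Lhs (Lab x (Or A B))) = Some (ILOr x A B)"
| "consumer (Rhs (Lab x (Or A B))) = Some (IROr x A B)"
| "consumer (Lhs (Lab x (Imp A B))) = Some (ILImp x A B)"
| "consumer (Rhs (Lab x (Imp A B))) = Some (IRImp x A B)"
| "consumer (Rhs (AllF a A)) = Some (IRAll a A)"
| "consumer (Lhs (ExF a A)) = Some (ILEx a A)"
| "consumer (Rhs (Lab x (Cond A B))) = Some (IRCond x A B)"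
| "consumer (Lhs (Cnd x a A B)) = Some (ILBar x a A B)"
| "consumer _ = None"

lemma signed_set_premisses:
  assumes "p \<in> premisses r s" and "\<phi> \<in> signed_set s" and "consumer \<phi> \<noteq> Some r"
  shows "\<phi> \<in> signed_set p"
  using assms by (cases s; cases r; cases \<phi>) (auto simp: Let_def in_diff_count)

definition search_step :: "rule_inst \<Rightarrow> sequent \<Rightarrow> sequent" where
  "search_step r s = (if applicable r s then (SOME p. p \<in> premisses r s \<and> \<not> derivable p) else s)"

primrec search :: "sequent \<Rightarrow> nat \<Rightarrow> sequent" where
  "search s 0 = s"
| "search s (Suc i) = search_step (rule_at i) (search s i)"

lemma search_step_underivable:
  assumes "\<not> derivable s" and "applicable r s"
  shows "search_step r s \<in> premisses r s \<and> \<not> derivable (search_step r s)"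
proof -
  have "\<not> (\<forall>p \<in> premisses r s. derivable p)"
    using derivable_if_premisses_derivable[of r "fst s" "snd s"] assms by (metis prod.collapse)
  then obtain p where "p \<in> premisses r s \<and> \<not> derivable p"
    by blast
  then show ?thesis
    unfolding search_step_def using assms(2) someI[of "\<lambda>p. p \<in> premisses r s \<and> \<not> derivable p" p]
    by simp
qed

lemma search_underivable: "\<not> derivable s \<Longrightarrow> \<not> derivable (search s i)"
  by (induction i) (use search_step_underivable in \<open>auto simp: search_step_def\<close>)

lemma signed_set_search_Suc:
  assumes "\<not> derivable s" and "\<phi> \<in> signed_set (search s i)" and "consumer \<phi> \<noteq> Some (rule_at i)"
  shows "\<phi> \<in> signed_set (search s (Suc i))"
proof (cases "applicable (rule_at i) (search s i)")
  case True
  then have "search s (Suc i) \<in> premisses (rule_at i) (search s i)"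
    using search_step_underivable[OF search_underivable[OF assms(1)]] by simp
  then show ?thesis
    using signed_set_premisses assms(2,3) by blast
next
  case False
  then show ?thesis
    using assms(2) by (simp add: search_step_def)
qed

lemma init_derivable: "Lab x (Atom p) \<in># \<Gamma> \<Longrightarrow> Lab x (Atom p) \<in># \<Delta> \<Longrightarrow> deriv \<Gamma> \<Delta>"
  by (auto elim!: mset_add intro: deriv.init)

lemma LBot_derivable: "Lab x Bot \<in># \<Gamma> \<Longrightarrow> deriv \<Gamma> \<Delta>"
  by (auto elim!: mset_add intro: deriv.LBot)

locale search_branch =
  fixes s0 :: sequent
  assumes underivable: "\<not> derivable s0"
begin

definition branch :: "signed_lf set" where
  "branch = (\<Union>i. signed_set (search s0 i))"

lemma persistent:
  assumes "\<phi> \<in> signed_set (search s0 i)" and "consumer \<phi> = None" and "i \<le> j"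
  shows "\<phi> \<in> signed_set (search s0 j)"
  using assms(3,1)
  by (induction rule: dec_induct) (use signed_set_search_Suc[OF underivable] assms(2) in auto)

lemma persistent_together:
  assumes "finite \<Phi>" and "\<Phi> \<subseteq> branch" and "\<forall>\<phi> \<in> \<Phi>. consumer \<phi> = None"
  obtains i where "\<And>j. i \<le> j \<Longrightarrow> \<Phi> \<subseteq> signed_set (search s0 j)"
  using assms
proof (induction arbitrary: thesis rule: finite_induct)
  case empty
  then show ?case by blast
next
  case (insert \<phi> \<Phi>)
  then obtain i where i: "\<And>j. i \<le> j \<Longrightarrow> \<Phi> \<subseteq> signed_set (search s0 j)"
    by blast
  obtain k where "\<phi> \<in> signed_set (search s0 k)"
    using insert.prems(2) by (auto simp: branch_def)
  then have "\<phi> \<in> signed_set (search s0 j)" if "max i k \<le> j" for j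
    using persistent insert.prems(3) that by auto
  with i show ?case
    by (intro insert.prems(1)[of "max i k"]) auto
qed

lemma applied_with_persistent:
  assumes "finite \<Phi>" and "\<Phi> \<subseteq> branch" and "\<forall>\<phi> \<in> \<Phi>. consumer \<phi> = None"
  obtains j where "\<Phi> \<subseteq> signed_set (search s0 j)" and "rule_at j = r"
  using persistent_together[OF assms] rule_at_infinitely_often by meson

lemma applied_to_consumed:
  assumes "\<phi> \<in> branch" and "consumer \<phi> = Some r"
  obtains j where "\<phi> \<in> signed_set (search s0 j)" and "rule_at j = r"
proof -
  obtain i where i: "\<phi> \<in> signed_set (search s0 i)"
    using assms(1) by (auto simp: branch_def)
  define j where "j = (LEAST j. i \<le> j \<and> rule_at j = r)"
  have j: "i \<le> j" "rule_at j = r"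
    using LeastI_ex[OF rule_at_infinitely_often[of i r]] by (auto simp: j_def)
  have not_yet: "rule_at k \<noteq> r" if "i \<le> k" "k < j" for k
    using not_less_Least[of k "\<lambda>j. i \<le> j \<and> rule_at j = r"] that by (auto simp: j_def)
  from j(1) i have "\<phi> \<in> signed_set (search s0 j)"
  proof (induction rule: dec_induct)
    case (step k)
    then show ?case
      using signed_set_search_Suc[OF underivable, of \<phi> k] assms(2) not_yet[of k] by simp
  qed
  then show thesis using j(2) that by blast
qed

lemma premiss_in_branch:
  assumes "\<Phi> \<subseteq> signed_set (search s0 j)" and "rule_at j = r"
    and "\<And>\<Gamma> \<Delta>. \<Phi> \<subseteq> signed_set (\<Gamma>, \<Delta>) \<Longrightarrow> applicable r (\<Gamma>, \<Delta>)"
  obtains \<Gamma> \<Delta> p where "\<Phi> \<subseteq> signed_set (\<Gamma>, \<Delta>)" "p \<in> premisses r (\<Gamma>, \<Delta>)" "signed_set p \<subseteq> branch"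
proof -
  have "applicable r (search s0 j)"
    using assms(1) assms(3)[of "fst (search s0 j)" "snd (search s0 j)"] by simp
  then have "search s0 (Suc j) \<in> premisses r (search s0 j)"
    using search_step_underivable[OF search_underivable[OF underivable]] assms(2) by simp
  moreover have "signed_set (search s0 (Suc j)) \<subseteq> branch"
    unfolding branch_def by blast
  ultimately show thesis
    using that[of "fst (search s0 j)" "snd (search s0 j)"] assms(1) by simp
qed

lemma closed_under_consuming_rule:
  assumes "\<phi> \<in> branch" and "consumer \<phi> = Some r"
    and "\<And>\<Gamma> \<Delta>. \<phi> \<in> signed_set (\<Gamma>, \<Delta>) \<Longrightarrow> applicable r (\<Gamma>, \<Delta>)"
  obtains \<Gamma> \<Delta> p where "\<phi> \<in> signed_set (\<Gamma>, \<Delta>)" "p \<in> premisses r (\<Gamma>, \<Delta>)" "signed_set p \<subseteq> branch"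
proof -
  obtain j where "{\<phi>} \<subseteq> signed_set (search s0 j)" "rule_at j = r"
    using applied_to_consumed[OF assms(1,2)] by blast
  then show thesis
    using premiss_in_branch assms(3) that by (metis insert_subset)
qed

lemma closed_under_rule:
  assumes "finite \<Phi>" and "\<Phi> \<subseteq> branch" and "\<forall>\<phi> \<in> \<Phi>. consumer \<phi> = None"
    and "\<And>\<Gamma> \<Delta>. \<Phi> \<subseteq> signed_set (\<Gamma>, \<Delta>) \<Longrightarrow> applicable r (\<Gamma>, \<Delta>)"
  obtains \<Gamma> \<Delta> p where "\<Phi> \<subseteq> signed_set (\<Gamma>, \<Delta>)" "p \<in> premisses r (\<Gamma>, \<Delta>)" "signed_set p \<subseteq> branch"
  using applied_with_persistent[OF assms(1-3)] premiss_in_branch assms(4) by metis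

definition antecedent :: "lf set" where
  "antecedent = {f. Lhs f \<in> branch}"

definition succedent :: "lf set" where
  "succedent = {f. Rhs f \<in> branch}"

lemma branch_init: "Lab x (Atom p) \<in> antecedent \<Longrightarrow> Lab x (Atom p) \<notin> succedent"
proof
  assume "Lab x (Atom p) \<in> antecedent" "Lab x (Atom p) \<in> succedent"
  then obtain i where "{Lhs (Lab x (Atom p)), Rhs (Lab x (Atom p))} \<subseteq> signed_set (search s0 i)"
    using persistent_together[of "{Lhs (Lab x (Atom p)), Rhs (Lab x (Atom p))}"]
    by (auto simp: antecedent_def succedent_def)
  then show False
    using init_derivable[of x p "fst (search s0 i)"] search_underivable[OF underivable, of i] by auto
qed

lemma branch_LBot: "Lab x Bot \<notin> antecedent"
proof
  assume "Lab x Bot \<in> antecedent"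
  then obtain i where "Lhs (Lab x Bot) \<in> signed_set (search s0 i)"
    by (auto simp: antecedent_def branch_def)
  then show False
    using LBot_derivable[of x "fst (search s0 i)"] search_underivable[OF underivable, of i] by auto
qed

lemmas branch_simps = antecedent_def succedent_def signed_set_def Let_def

lemma saturated_branch: "saturated_pair antecedent succedent"
proof
  show "Lab x (Atom p) \<in> antecedent \<Longrightarrow> Lab x (Atom p) \<notin> succedent" for x p
    by (rule branch_init)
  show "Lab x Bot \<notin> antecedent" for x
    by (rule branch_LBot)
  show "Lab x A \<in> antecedent \<and> Lab x B \<in> antecedent" if "Lab x (And A B) \<in> antecedent" for x A B
    by (rule closed_under_consuming_rule[of "Lhs (Lab x (And A B))" "ILAnd x A B"])
      (use that in \<open>auto simp: branch_simps\<close>)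
  show "Lab x A \<in> succedent \<or> Lab x B \<in> succedent" if "Lab x (And A B) \<in> succedent" for x A B
    by (rule closed_under_consuming_rule[of "Rhs (Lab x (And A B))" "IRAnd x A B"])
      (use that in \<open>auto simp: branch_simps\<close>)
  show "Lab x A \<in> antecedent \<or> Lab x B \<in> antecedent" if "Lab x (Or A B) \<in> antecedent" for x A B
    by (rule closed_under_consuming_rule[of "Lhs (Lab x (Or A B))" "ILOr x A B"])
      (use that in \<open>auto simp: branch_simps\<close>)
  show "Lab x A \<in> succedent \<and> Lab x B \<in> succedent" if "Lab x (Or A B) \<in> succedent" for x A B
    by (rule closed_under_consuming_rule[of "Rhs (Lab x (Or A B))" "IROr x A B"])
      (use that in \<open>auto simp: branch_simps\<close>)
  show "Lab x A \<in> succedent \<or> Lab x B \<in> antecedent" if "Lab x (Imp A B) \<in> antecedent" for x A B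
    by (rule closed_under_consuming_rule[of "Lhs (Lab x (Imp A B))" "ILImp x A B"])
      (use that in \<open>auto simp: branch_simps\<close>)
  show "Lab x A \<in> antecedent \<and> Lab x B \<in> succedent" if "Lab x (Imp A B) \<in> succedent" for x A B
    by (rule closed_under_consuming_rule[of "Rhs (Lab x (Imp A B))" "IRImp x A B"])
      (use that in \<open>auto simp: branch_simps\<close>)
  show "Lab y A \<in> antecedent" if "InW y a \<in> antecedent" "AllF a A \<in> antecedent" for y a A
    by (rule closed_under_rule[of "{Lhs (InW y a), Lhs (AllF a A)}" "ILAll y a A"])
      (use that in \<open>auto simp: branch_simps\<close>)
  show "\<exists>y. InW y a \<in> antecedent \<and> Lab y A \<in> succedent" if "AllF a A \<in> succedent" for a A
    by (rule closed_under_consuming_rule[of "Rhs (AllF a A)" "IRAll a A"])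
      (use that in \<open>auto simp: branch_simps\<close>)
  show "\<exists>y. InW y a \<in> antecedent \<and> Lab y A \<in> antecedent" if "ExF a A \<in> antecedent" for a A
    by (rule closed_under_consuming_rule[of "Lhs (ExF a A)" "ILEx a A"])
      (use that in \<open>auto simp: branch_simps\<close>)
  show "Lab y A \<in> succedent" if "InW y a \<in> antecedent" "ExF a A \<in> succedent" for y a A
    by (rule closed_under_rule[of "{Lhs (InW y a), Rhs (ExF a A)}" "IREx y a A"])
      (use that in \<open>auto simp: branch_simps\<close>)
  show "\<exists>n. InN (NV n) x \<in> antecedent \<and> ExF (NV n) A \<in> antecedent \<and> Cnd x (NV n) A B \<in> succedent"
    if "Lab x (Cond A B) \<in> succedent" for x A B
    by (rule closed_under_consuming_rule[of "Rhs (Lab x (Cond A B))" "IRCond x A B"])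
      (use that in \<open>auto simp: branch_simps\<close>)
  show "ExF a A \<in> succedent \<or> Cnd x a A B \<in> antecedent"
    if "InN a x \<in> antecedent" "Lab x (Cond A B) \<in> antecedent" for a x A B
    by (rule closed_under_rule[of "{Lhs (InN a x), Lhs (Lab x (Cond A B))}" "ILCond a x A B"])
      (use that in \<open>auto simp: branch_simps\<close>)
  show "ExF c A \<in> succedent \<or> AllF c (Imp A B) \<in> succedent"
    if "InN c x \<in> antecedent" "Sub c a \<in> antecedent" "Cnd x a A B \<in> succedent" for c x a A B
    by (rule closed_under_rule[of "{Lhs (InN c x), Lhs (Sub c a), Rhs (Cnd x a A B)}" "IRBar c x a A B"])
      (use that in \<open>auto simp: branch_simps\<close>)
  show "\<exists>n. InN (NV n) x \<in> antecedent \<and> Sub (NV n) a \<in> antecedent \<and> ExF (NV n) A \<in> antecedent \<and>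
      AllF (NV n) (Imp A B) \<in> antecedent" if "Cnd x a A B \<in> antecedent" for x a A B
    by (rule closed_under_consuming_rule[of "Lhs (Cnd x a A B)" "ILBar x a A B"])
      (use that in \<open>auto simp: branch_simps\<close>)
  show "Sub a a \<in> antecedent" for a
    by (rule closed_under_rule[of "{}" "IRef a"]) (auto simp: branch_simps)
  show "Sub c a \<in> antecedent" if "Sub c b \<in> antecedent" "Sub b a \<in> antecedent" for c b a
  proof (cases "c = b")
    case False
    show ?thesis
      by (rule closed_under_rule[of "{Lhs (Sub c b), Lhs (Sub b a)}" "ITr c b a"])
        (use that False in \<open>auto simp: branch_simps\<close>)
  qed (use that in simp)
  show "InW y b \<in> antecedent" if "InW y a \<in> antecedent" "Sub a b \<in> antecedent" for y a b
    by (rule closed_under_rule[of "{Lhs (InW y a), Lhs (Sub a b)}" "ILSub y a b"])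
      (use that in \<open>auto simp: branch_simps\<close>)
  show "\<exists>a. InN a x \<in> antecedent" for x
    by (rule closed_under_rule[of "{}" "IN x"]) (auto simp: branch_simps)
  show "InW x a \<in> antecedent" if "InN a x \<in> antecedent" for a x
    by (rule closed_under_rule[of "{Lhs (InN a x)}" "IW a x"])
      (use that in \<open>auto simp: branch_simps\<close>)
  show "InN (Sg x) x \<in> antecedent \<and> Sub (Sg x) a \<in> antecedent" if "InN a x \<in> antecedent" for a x
    by (rule closed_under_rule[of "{Lhs (InN a x)}" "IC a x"])
      (use that in \<open>auto simp: branch_simps\<close>)
  show "Lab x (Atom p) \<in> antecedent \<longleftrightarrow> Lab y (Atom p) \<in> antecedent"
    if "InW y (Sg x) \<in> antecedent" for y x p
  proof
    show "Lab y (Atom p) \<in> antecedent" if "Lab x (Atom p) \<in> antecedent"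
      by (rule closed_under_rule[of "{Lhs (InW y (Sg x)), Lhs (Lab x (Atom p))}" "IRepl1_At y x p"])
        (use that \<open>InW y (Sg x) \<in> antecedent\<close> in \<open>auto simp: branch_simps\<close>)
    show "Lab x (Atom p) \<in> antecedent" if "Lab y (Atom p) \<in> antecedent"
      by (rule closed_under_rule[of "{Lhs (InW y (Sg x)), Lhs (Lab y (Atom p))}" "IRepl2_At y x p"])
        (use that \<open>InW y (Sg x) \<in> antecedent\<close> in \<open>auto simp: branch_simps\<close>)
  qed
  show "InN a x \<in> antecedent \<longleftrightarrow> InN a y \<in> antecedent" if "InW y (Sg x) \<in> antecedent" for y x a
  proof
    show "InN a y \<in> antecedent" if "InN a x \<in> antecedent"
      by (rule closed_under_rule[of "{Lhs (InW y (Sg x)), Lhs (InN a x)}" "IRepl1_N y x a"])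
        (use that \<open>InW y (Sg x) \<in> antecedent\<close> in \<open>auto simp: branch_simps\<close>)
    show "InN a x \<in> antecedent" if "InN a y \<in> antecedent"
      by (rule closed_under_rule[of "{Lhs (InW y (Sg x)), Lhs (InN a y)}" "IRepl2_N y x a"])
        (use that \<open>InW y (Sg x) \<in> antecedent\<close> in \<open>auto simp: branch_simps\<close>)
  qed
qed

end

lemma underivable_extends_to_saturated_pair:
  assumes "\<not> deriv \<Gamma> \<Delta>"
  obtains G D where "saturated_pair G D" and "set_mset \<Gamma> \<subseteq> G" and "set_mset \<Delta> \<subseteq> D"
proof -
  interpret search_branch "(\<Gamma>, \<Delta>)"
    using assms by unfold_locales simp
  have "signed_set (search (\<Gamma>, \<Delta>) 0) \<subseteq> branch"
    unfolding branch_def by blast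
  then have "set_mset \<Gamma> \<subseteq> antecedent" "set_mset \<Delta> \<subseteq> succedent"
    by (auto simp: antecedent_def succedent_def signed_set_def)
  then show thesis
    using saturated_branch that by blast
qed

theorem mainTheorem19:
  fixes A :: fm and x :: nat
  assumes "\<forall>M :: nat nmodel. nmodel M \<and> centering M \<longrightarrow> valid_in M A"
  shows "deriv {#} {#Lab x A#}"
proof (rule ccontr)
  assume "\<not> deriv {#} {#Lab x A#}"
  then obtain G D where "saturated_pair G D" and "Lab x A \<in> D"
    by (rule underivable_extends_to_saturated_pair) simp
  then interpret saturated_pair G D
    by simp
  have "\<not> forces countermodel (world (rep x) None) A"
    using truthfulD(2)[OF truth_lemma \<open>Lab x A \<in> D\<close>] .
  moreover have "valid_in countermodel A"
    using assms nmodel_countermodel centering_countermodel by blast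
  ultimately show False
    by (simp add: valid_in_def)
qed

end
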